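(* Let $\{x^k\}$ be generated by Algorithm IRG with the backtracking stepsize rule and $\theta<\mu$. Assume $\rho_k\to0$, that $\{x^k\}$ has an accumulation point $\bar x$, and that $f$ satisfies the KL property at $\bar x$. Then $\bar x$ is a stationary point of $f$ and $x^k\to\bar x$ as $k\to\infty$.
   Context: Algorithm IRG (general inexact reduced gradient framework). Let $f:\mathbb R^n\to\mathbb R$ be continuously differentiable. Parameters: initial point $x^1\in\mathbb R^n$, initial radii $\varepsilon_1>0$, $r_1>0$, reduction factors $\mu,\theta\in(0,1)$, and a sequence $\{\rho_k\}$ of positive numbers. For $k=1,2,\dots$: (1) choose $g^k\in\mathbb R^n$ with $\|g^k-\nabla f(x^k)\|\le\min\{\varepsilon_k,\rho_k\}$; (2) if $\|g^k\|\le r_k+\varepsilon_k$, set $r_{k+1}=\mu r_k$, $\varepsilon_{k+1}=\theta\varepsilon_k$, $d^k=0$; otherwise set $r_{k+1}=r_k$, $\varepsilon_{k+1}=\varepsilon_k$ and $d^k=-\frac{\|g^k\|-\varepsilon_k}{\|g^k\|}g^k$; (3) choose a stepsize $t_k>0$ by some rule; (4) set $x^{k+1}=x^k+t_kd^k$. Backtracking stepsize rule: fix $\beta,\gamma,\tau\in(0,1)$; if $d^k=0$ set $t_k=\tau$; otherwise $t_k=\max\{t\in\{1,\gamma,\gamma^2,\dots\}: f(x^k+td^k)\le f(x^k)-\beta t\|d^k\|^2\}$. KL property: $f$ satisfies the KL property at $\bar x$ if there exist $\eta>0$, a neighborhood $U$ of $\bar x$, and a nondecreasing function $\psi:(0,\eta)\to(0,\infty)$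 such that $1/\psi$ is integrable over $(0,\eta)$ and $\|\nabla f(x)\|\ge\psi(f(x)-f(\bar x))$ for all $x\in U$ with $f(\bar x)<f(x)<f(\bar x)+\eta$. *)

theory Defs
  imports "HOL-Analysis.Analysis"
begin

definition C1_with_gradient :: "('a::euclidean_space \<Rightarrow> real) \<Rightarrow> ('a \<Rightarrow> 'a) \<Rightarrow> bool" where
  "C1_with_gradient f grad \<longleftrightarrow>
     (\<forall>x. (f has_derivative (\<lambda>h. grad x \<bullet> h)) (at x)) \<and> continuous_on UNIV grad"

definition KL_property :: "('a::euclidean_space \<Rightarrow> real) \<Rightarrow> ('a \<Rightarrow> 'a) \<Rightarrow> 'a \<Rightarrow> bool" where
  "KL_property f grad xbar \<longleftrightarrow>
     (\<exists>\<eta>>0. \<exists>U. open U \<and> xbar \<in> U \<and> (\<exists>\<psi>::real \<Rightarrow> real.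
        mono_on {0<..<\<eta>} \<psi> \<and> (\<forall>s\<in>{0<..<\<eta>}. \<psi> s > 0) \<and>
        (\<lambda>s. 1 / \<psi> s) integrable_on {0<..<\<eta>} \<and>
        (\<forall>x\<in>U. f xbar < f x \<and> f x < f xbar + \<eta> \<longrightarrow> norm (grad x) \<ge> \<psi> (f x - f xbar))))"

definition armijo :: "('a::real_normed_vector \<Rightarrow> real) \<Rightarrow> real \<Rightarrow> 'a \<Rightarrow> 'a \<Rightarrow> real \<Rightarrow> bool" where
  "armijo f \<beta> xk dk s \<longleftrightarrow> f (xk + s *\<^sub>R dk) \<le> f xk - \<beta> * s * (norm dk)^2"

definition IRG_backtracking ::
  "('a::euclidean_space \<Rightarrow> real) \<Rightarrow> ('a \<Rightarrow> 'a) \<Rightarrow> real \<Rightarrow> real \<Rightarrow> real \<Rightarrow> real \<Rightarrow> real \<Rightarrow>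
   (nat \<Rightarrow> real) \<Rightarrow> (nat \<Rightarrow> 'a) \<Rightarrow> (nat \<Rightarrow> 'a) \<Rightarrow> (nat \<Rightarrow> real) \<Rightarrow> (nat \<Rightarrow> real) \<Rightarrow>
   (nat \<Rightarrow> 'a) \<Rightarrow> (nat \<Rightarrow> real) \<Rightarrow> bool" where
  "IRG_backtracking f grad \<mu> \<theta> \<beta> \<gamma> \<tau> \<rho> x g \<epsilon> r d t \<longleftrightarrow>
     \<epsilon> 0 > 0 \<and> r 0 > 0 \<and> 0 < \<mu> \<and> \<mu> < 1 \<and> 0 < \<theta> \<and> \<theta> < 1 \<and>
     0 < \<beta> \<and> \<beta> < 1 \<and> 0 < \<gamma> \<and> \<gamma> < 1 \<and> 0 < \<tau> \<and> \<tau> < 1 \<and>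
     (\<forall>k. \<rho> k > 0) \<and>
     (\<forall>k. norm (g k - grad (x k)) \<le> min (\<epsilon> k) (\<rho> k)) \<and>
     (\<forall>k. if norm (g k) \<le> r k + \<epsilon> k
          then r (Suc k) = \<mu> * r k \<and> \<epsilon> (Suc k) = \<theta> * \<epsilon> k \<and> d k = 0
          else r (Suc k) = r k \<and> \<epsilon> (Suc k) = \<epsilon> k \<and>
               d k = - ((norm (g k) - \<epsilon> k) / norm (g k)) *\<^sub>R g k) \<and>
     (\<forall>k. if d k = 0 then t k = \<tau>
          else (\<exists>j::nat. t k = \<gamma> ^ j \<and> armijo f \<beta> (x k) (d k) (t k) \<and>
                         (\<forall>i<j. \<not> armijo f \<beta> (x k) (d k) (\<gamma> ^ i)))) \<and>
     (\<forall>k. x (Suc k) = x k + t k *\<^sub>R d k)"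

end

theory Submission
  imports Defs
begin

text \<open>
  At a non-null step the direction satisfies \<open>\<langle>\<nabla>f(x\<^sub>k), d\<^sub>k\<rangle> \<le> -\<parallel>d\<^sub>k\<parallel>\<^sup>2\<close> and, because \<open>\<theta> < \<mu>\<close> keeps
  \<open>\<epsilon>\<^sub>k / r\<^sub>k\<close> bounded, \<open>\<parallel>\<nabla>f(x\<^sub>k)\<parallel> \<le> C \<parallel>d\<^sub>k\<parallel>\<close> for a fixed \<open>C\<close>. Combined with the Armijo decrease and the KL inequality,
  this bounds every step near \<open>xbar\<close> by a decrease of \<open>(C/\<beta>) \<phi>(f(x\<^sub>k) - f(xbar))\<close>, where
  \<open>\<phi>(s) = \<integral>\<^sub>0\<^sup>s 1/\<psi>\<close>. Once an iterate near the cluster point has small \<open>\<phi>\<close>-value, the tail has finite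
  length and stays near it, so the whole sequence converges. If from some index on every step were
  non-null, the radius would freeze, \<open>\<parallel>d\<^sub>k\<parallel>\<close> would stay bounded away from zero while the steps
  vanish, and the rejected Armijo trial just before \<open>t\<^sub>k\<close> would contradict continuity of \<open>\<nabla>f\<close> at the
  limit. Hence null steps recur, \<open>r\<^sub>k, \<epsilon>\<^sub>k \<rightarrow> 0\<close>, and \<open>\<parallel>\<nabla>f(x\<^sub>k)\<parallel> \<le> r\<^sub>k + 2\<epsilon>\<^sub>k\<close> at null steps gives
  \<open>\<nabla>f(xbar) = 0\<close> in the limit.
\<close>

lemma has_field_derivative_along_line:
  fixes f :: "'a::real_inner \<Rightarrow> real"
  assumes deriv: "\<And>y. (f has_derivative (\<lambda>h. grad y \<bullet> h)) (at y)"
  shows "((\<lambda>u. f (y + u *\<^sub>R v)) has_field_derivative (grad (y + z *\<^sub>R v) \<bullet> v)) (at z)"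
proof -
  have "((\<lambda>u. y + u *\<^sub>R v) has_derivative (\<lambda>u. u *\<^sub>R v)) (at z)"
    by (auto intro!: derivative_eq_intros)
  from has_derivative_compose[OF this deriv]
  have "((\<lambda>u. f (y + u *\<^sub>R v)) has_derivative (\<lambda>u. grad (y + z *\<^sub>R v) \<bullet> (u *\<^sub>R v))) (at z)"
    by simp
  moreover have "(\<lambda>u. grad (y + z *\<^sub>R v) \<bullet> (u *\<^sub>R v)) = (*) (grad (y + z *\<^sub>R v) \<bullet> v)"
    by (auto simp: fun_eq_iff)
  ultimately show ?thesis
    unfolding has_field_derivative_def by simp
qed

lemma armijo_failure_mean_value:
  fixes f :: "'a::real_inner \<Rightarrow> real"
  assumes deriv: "\<And>y. (f has_derivative (\<lambda>h. grad y \<bullet> h)) (at y)"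
    and s: "0 < s" and fails: "\<not> armijo f \<beta> y v s"
  shows "\<exists>z. 0 < z \<and> z < s \<and> - (\<beta> * (norm v)\<^sup>2) < grad (y + z *\<^sub>R v) \<bullet> v"
proof -
  obtain z where z: "0 < z" "z < s"
    and mv: "f (y + s *\<^sub>R v) - f (y + 0 *\<^sub>R v) = (s - 0) * (grad (y + z *\<^sub>R v) \<bullet> v)"
    using MVT2[OF s has_field_derivative_along_line[OF deriv]] by blast
  have "s * (- (\<beta> * (norm v)\<^sup>2)) < s * (grad (y + z *\<^sub>R v) \<bullet> v)"
    using fails mv unfolding armijo_def by (simp add: algebra_simps)
  then show ?thesis
    using z s mult_less_cancel_left_pos by blast
qed

definition desingularizer :: "(real \<Rightarrow> real) \<Rightarrow> real \<Rightarrow> real" where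
  "desingularizer \<psi> c = integral {0..c} (\<lambda>s. 1 / \<psi> s)"

context
  fixes \<psi> :: "real \<Rightarrow> real" and \<eta> :: real
  assumes \<psi>_mono: "mono_on {0<..<\<eta>} \<psi>"
    and \<psi>_pos: "\<forall>s\<in>{0<..<\<eta>}. 0 < \<psi> s"
    and inverse_\<psi>_integrable: "(\<lambda>s. 1 / \<psi> s) integrable_on {0<..<\<eta>}"
begin

lemma inverse_integrable_on_subinterval:
  assumes "0 \<le> a" "c < \<eta>"
  shows "(\<lambda>s. 1 / \<psi> s) integrable_on {a..c}"
proof -
  have "(\<lambda>s. 1 / \<psi> s) integrable_on {0..<\<eta>}"
  proof (rule integrable_spike_set[OF inverse_\<psi>_integrable])
    show "negligible {s \<in> {0<..<\<eta>} - {0..<\<eta>}. 1 / \<psi> s \<noteq> 0}"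
      by (rule negligible_subset[of "{}"]) auto
    show "negligible {s \<in> {0..<\<eta>} - {0<..<\<eta>}. 1 / \<psi> s \<noteq> 0}"
      by (rule negligible_subset[of "{0}"]) auto
  qed
  then show ?thesis
    by (rule integrable_on_subinterval) (use assms in auto)
qed

text \<open>\<open>1 / \<psi>\<close> is at least \<open>1 / \<psi> a\<close> on \<open>{b<..a}\<close>; the endpoint \<open>b\<close>, possibly \<open>0\<close> where \<open>\<psi>\<close>
  is unconstrained, is a null set and is patched in \<open>h\<close>.\<close>
lemma desingularizer_diff_ge:
  assumes b: "0 \<le> b" "b \<le> a" and a: "a < \<eta>"
  shows "(a - b) / \<psi> a \<le> desingularizer \<psi> a - desingularizer \<psi> b"
proof -
  define h where "h s = (if s = b then 1 / \<psi> a else 1 / \<psi> s)" for s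
  have h_integrable: "(\<lambda>s. 1 / \<psi> s) integrable_on {b..a}"
    using inverse_integrable_on_subinterval b a by auto
  have "desingularizer \<psi> b + integral {b..a} (\<lambda>s. 1 / \<psi> s) = desingularizer \<psi> a"
    unfolding desingularizer_def
    by (rule Henstock_Kurzweil_Integration.integral_combine) (use b a inverse_integrable_on_subinterval in auto)
  moreover have "integral {b..a} h = integral {b..a} (\<lambda>s. 1 / \<psi> s)"
    by (rule integral_spike[where S="{b}"]) (auto simp: h_def)
  moreover have "integral {b..a} (\<lambda>s. 1 / \<psi> a) \<le> integral {b..a} h"
  proof (rule integral_le)
    show "h integrable_on {b..a}"
      by (rule integrable_spike[OF h_integrable, of "{b}"]) (auto simp: h_def)
    show "1 / \<psi> a \<le> h s" if s: "s \<in> {b..a}" for s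
    proof (cases "s = b")
      case False
      then have "s \<in> {0<..<\<eta>}" "a \<in> {0<..<\<eta>}"
        using s b a by auto
      then have "\<psi> s \<le> \<psi> a" "0 < \<psi> s"
        using mono_onD[OF \<psi>_mono] s \<psi>_pos by auto
      then show ?thesis
        using False by (simp add: h_def frac_le)
    qed (simp add: h_def)
  qed (rule integrable_const_ivl)
  moreover have "integral {b..a} (\<lambda>s. 1 / \<psi> a) = (a - b) / \<psi> a"
    using b by (simp add: content_real)
  ultimately show ?thesis
    by linarith
qed

lemma desingularizer_mono:
  assumes "0 \<le> b" "b \<le> a" "a < \<eta>"
  shows "desingularizer \<psi> b \<le> desingularizer \<psi> a"
proof (cases "b = a")
  case False
  then have "0 < \<psi> a"
    using assms \<psi>_pos by auto
  then show ?thesis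
    using desingularizer_diff_ge[OF assms] assms by (smt (verit) divide_nonneg_pos)
qed simp

lemma desingularizer_nonneg:
  assumes "0 \<le> c" "c < \<eta>"
  shows "0 \<le> desingularizer \<psi> c"
  using desingularizer_mono[of 0 c] assms by (simp add: desingularizer_def)

lemma desingularizer_tendsto_zero:
  fixes u :: "nat \<Rightarrow> real"
  assumes "u \<longlonglongrightarrow> 0" and "\<And>k. 0 \<le> u k" and "0 < \<eta>"
  shows "(\<lambda>k. desingularizer \<psi> (u k)) \<longlonglongrightarrow> 0"
proof -
  have "continuous_on {0..\<eta>/2} (desingularizer \<psi>)"
    unfolding desingularizer_def
    by (rule indefinite_integral_continuous_1, rule inverse_integrable_on_subinterval) (use assms in auto)
  then have "continuous (at 0 within {0..\<eta>/2}) (desingularizer \<psi>)"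
    using assms by (simp add: continuous_on_eq_continuous_within)
  moreover have "\<forall>\<^sub>F k in sequentially. u k \<in> {0..\<eta>/2}"
    using order_tendstoD(2)[OF assms(1), of "\<eta>/2"] assms by (auto elim: eventually_mono)
  ultimately show ?thesis
    using continuous_within_tendsto_compose assms(1) by (fastforce simp: desingularizer_def)
qed

end

lemma dist_le_telescoping:
  fixes x :: "nat \<Rightarrow> 'a::metric_space"
  assumes "\<And>i. i < m \<Longrightarrow> dist (x (Suc (n + i))) (x (n + i)) \<le> \<Phi> (n + i) - \<Phi> (Suc (n + i))"
  shows "dist (x (n + m)) (x n) \<le> \<Phi> n - \<Phi> (n + m)"
  using assms
proof (induction m)
  case (Suc m)
  have "dist (x (n + Suc m)) (x n) \<le> dist (x (Suc (n + m))) (x (n + m)) + dist (x (n + m)) (x n)"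
    by (simp add: dist_triangle)
  also have "\<dots> \<le> (\<Phi> (n + m) - \<Phi> (Suc (n + m))) + (\<Phi> n - \<Phi> (n + m))"
    using Suc by (intro add_mono) auto
  finally show ?case
    by simp
qed simp

lemma tail_in_ball_of_local_length_bound:
  fixes x :: "nat \<Rightarrow> 'a::metric_space"
  assumes \<Phi>_nonneg: "\<And>k. K \<le> k \<Longrightarrow> 0 \<le> \<Phi> k"
    and length_bound:
      "\<And>k. K \<le> k \<Longrightarrow> dist (x k) xbar < \<delta> \<Longrightarrow> dist (x (Suc k)) (x k) \<le> \<Phi> k - \<Phi> (Suc k)"
    and start: "dist (x K) xbar + \<Phi> K < \<delta>"
  shows "dist (x (K + m)) xbar < \<delta>"
proof (induction m rule: less_induct)
  case (less m)
  have "dist (x (K + m)) xbar \<le> dist (x (K + m)) (x K) + dist (x K) xbar"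
    by (rule dist_triangle)
  also have "\<dots> \<le> \<Phi> K - \<Phi> (K + m) + dist (x K) xbar"
    using dist_le_telescoping[of m x K \<Phi>] length_bound less by simp
  also have "\<dots> < \<delta>"
    using \<Phi>_nonneg[of "K + m"] start by simp
  finally show ?case .
qed

lemma tendsto_of_local_length_bound:
  fixes x :: "nat \<Rightarrow> 'a::metric_space"
  assumes s: "strict_mono s" and cluster: "(x \<circ> s) \<longlonglongrightarrow> xbar" and \<delta>: "0 < \<delta>"
    and \<Phi>_nonneg: "\<And>k. K0 \<le> k \<Longrightarrow> 0 \<le> \<Phi> k" and \<Phi>_lim: "\<Phi> \<longlonglongrightarrow> 0"
    and length_bound:
      "\<And>k. K0 \<le> k \<Longrightarrow> dist (x k) xbar < \<delta> \<Longrightarrow> dist (x (Suc k)) (x k) \<le> \<Phi> k - \<Phi> (Suc k)"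
  shows "x \<longlonglongrightarrow> xbar"
proof -
  have "(\<lambda>j. dist (x (s j)) xbar + \<Phi> (s j)) \<longlonglongrightarrow> 0 + 0"
    using cluster LIMSEQ_subseq_LIMSEQ[OF \<Phi>_lim s]
    by (intro tendsto_add tendsto_dist_iff[THEN iffD1]) (simp_all add: o_def)
  then have "\<forall>\<^sub>F j in sequentially. dist (x (s j)) xbar + \<Phi> (s j) < \<delta> \<and> K0 \<le> s j"
    using order_tendstoD(2)[of _ 0 sequentially \<delta>] \<delta> filterlim_subseq[OF s]
    by (auto intro: eventually_conj simp: filterlim_at_top)
  then obtain K where K: "dist (x K) xbar + \<Phi> K < \<delta>" "K0 \<le> K"
    using eventually_happens'[OF sequentially_bot] by blast
  have near: "dist (x (n + i)) xbar < \<delta>" if "K \<le> n" for n i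
    using tail_in_ball_of_local_length_bound[of K \<Phi> x xbar \<delta> "n - K + i"] \<Phi>_nonneg length_bound K that
    by (simp add: add.assoc[symmetric])
  have "dist (x n) xbar \<le> \<Phi> n" if n: "K \<le> n" for n
  proof -
    have "\<forall>\<^sub>F j in sequentially. n \<le> s j"
      using filterlim_subseq[OF s] by (simp add: filterlim_at_top)
    then have "\<forall>\<^sub>F j in sequentially. dist (x (s j)) (x n) \<le> \<Phi> n"
    proof (rule eventually_mono)
      fix j assume "n \<le> s j"
      then obtain i where i: "s j = n + i"
        using le_Suc_ex by blast
      then show "dist (x (s j)) (x n) \<le> \<Phi> n"
        using dist_le_telescoping[of i x n \<Phi>] length_bound near \<Phi>_nonneg[of "n + i"] n K by simp
    qed
    then have "dist xbar (x n) \<le> \<Phi> n"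
      by (rule tendsto_upperbound[OF tendsto_dist[OF cluster[unfolded o_def] tendsto_const] _ sequentially_bot])
    then show ?thesis
      by (simp add: dist_commute)
  qed
  then have "\<forall>\<^sub>F n in sequentially. dist (x n) xbar \<le> \<Phi> n"
    unfolding eventually_sequentially by blast
  then have "(\<lambda>n. dist (x n) xbar) \<longlonglongrightarrow> 0"
    by (intro tendsto_sandwich[OF _ _ tendsto_const \<Phi>_lim]) auto
  then show ?thesis
    by (rule tendsto_dist_iff[THEN iffD2])
qed

locale irg_backtracking =
  fixes f :: "'a::euclidean_space \<Rightarrow> real" and grad :: "'a \<Rightarrow> 'a"
    and x g d :: "nat \<Rightarrow> 'a" and \<epsilon> r t \<rho> :: "nat \<Rightarrow> real"
    and \<mu> \<theta> \<beta> \<gamma> \<tau> :: real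
  assumes C1: "C1_with_gradient f grad"
    and iteration: "IRG_backtracking f grad \<mu> \<theta> \<beta> \<gamma> \<tau> \<rho> x g \<epsilon> r d t"
    and \<theta>_less_\<mu>: "\<theta> < \<mu>"
begin

lemma parameters:
  "0 < \<epsilon> 0" "0 < r 0" "0 < \<mu>" "\<mu> < 1" "0 < \<theta>" "0 < \<beta>" "\<beta> < 1" "0 < \<gamma>" "\<gamma> < 1" "0 < \<tau>" "\<tau> < 1"
  using iteration unfolding IRG_backtracking_def by auto

lemma gradient_error: "norm (g k - grad (x k)) \<le> \<epsilon> k"
  using iteration unfolding IRG_backtracking_def by auto

lemma radii_direction_update:
  "if norm (g k) \<le> r k + \<epsilon> k
   then r (Suc k) = \<mu> * r k \<and> \<epsilon> (Suc k) = \<theta> * \<epsilon> k \<and> d k = 0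
   else r (Suc k) = r k \<and> \<epsilon> (Suc k) = \<epsilon> k \<and> d k = - ((norm (g k) - \<epsilon> k) / norm (g k)) *\<^sub>R g k"
  using iteration unfolding IRG_backtracking_def by auto

lemma stepsize_rule:
  "if d k = 0 then t k = \<tau>
   else \<exists>j. t k = \<gamma> ^ j \<and> armijo f \<beta> (x k) (d k) (t k) \<and> (\<forall>i<j. \<not> armijo f \<beta> (x k) (d k) (\<gamma> ^ i))"
  using iteration unfolding IRG_backtracking_def by auto

lemma iterate_Suc: "x (Suc k) = x k + t k *\<^sub>R d k"
  using iteration unfolding IRG_backtracking_def by auto

lemma has_derivative_grad: "(f has_derivative (\<lambda>h. grad y \<bullet> h)) (at y)"
  using C1 unfolding C1_with_gradient_def by auto

lemma isCont_grad: "isCont grad y"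
  using C1 unfolding C1_with_gradient_def by (simp add: continuous_on_eq_continuous_at)

lemma radii_pos: "0 < \<epsilon> k" "0 < r k"
proof (induction k)
  case (Suc k)
  then show "0 < \<epsilon> (Suc k)" "0 < r (Suc k)"
    using radii_direction_update[of k] parameters by (auto split: if_splits)
qed (use parameters in auto)

lemma radius_antimono: "k \<le> m \<Longrightarrow> r m \<le> r k"
proof (rule lift_Suc_antimono_le)
  show "r (Suc n) \<le> r n" for n
    using radii_direction_update[of n] radii_pos(2)[of n] parameters by (auto split: if_splits)
qed

text \<open>This is where \<open>\<theta> < \<mu>\<close> enters: the error bound shrinks at least as fast as the radius.\<close>
lemma error_le_radius: "\<epsilon> k \<le> \<epsilon> 0 / r 0 * r k"
proof -
  have "\<epsilon> k * r 0 \<le> \<epsilon> 0 * r k"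
  proof (induction k)
    case (Suc k)
    have "\<theta> * (\<epsilon> k * r 0) \<le> \<theta> * (\<epsilon> 0 * r k)"
      using Suc parameters by simp
    also have "\<dots> \<le> \<mu> * (\<epsilon> 0 * r k)"
      using \<theta>_less_\<mu> parameters radii_pos[of k] by (intro mult_right_mono) auto
    finally have "\<theta> * (\<epsilon> k * r 0) \<le> \<mu> * (\<epsilon> 0 * r k)" .
    then show ?case
      using radii_direction_update[of k] Suc by (auto split: if_splits simp: algebra_simps)
  qed simp
  then show ?thesis
    using parameters by (simp add: field_simps)
qed

lemma stepsize_pos: "0 < t k"
  using stepsize_rule[of k] parameters by (auto split: if_splits)

lemma sufficient_decrease: "f (x (Suc k)) \<le> f (x k) - \<beta> * t k * (norm (d k))\<^sup>2"
  using stepsize_rule[of k] iterate_Suc[of k] unfolding armijo_def by (auto split: if_splits)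

lemma objective_decseq: "decseq (\<lambda>k. f (x k))"
proof (rule decseq_SucI)
  fix k
  have "0 \<le> \<beta> * t k * (norm (d k))\<^sup>2"
    using parameters stepsize_pos[of k] by simp
  then show "f (x (Suc k)) \<le> f (x k)"
    using sufficient_decrease[of k] by linarith
qed

lemma null_step_iff: "d k = 0 \<longleftrightarrow> norm (g k) \<le> r k + \<epsilon> k"
proof -
  have "d k \<noteq> 0" if "r k + \<epsilon> k < norm (g k)"
  proof -
    have "0 < norm (g k) - \<epsilon> k" "0 < norm (g k)"
      using that radii_pos[of k] by auto
    moreover have "d k = - ((norm (g k) - \<epsilon> k) / norm (g k)) *\<^sub>R g k"
      using radii_direction_update[of k] that by auto
    ultimately show ?thesis
      by simp
  qed
  then show ?thesis
    using radii_direction_update[of k] radii_pos[of k] by (auto split: if_splits)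
qed

lemma norm_grad_le_at_null_step:
  assumes "d k = 0"
  shows "norm (grad (x k)) \<le> r k + 2 * \<epsilon> k"
  using assms null_step_iff[of k] gradient_error[of k]
    norm_triangle_ineq[of "g k" "grad (x k) - g k"]
  by (simp add: norm_minus_commute)

lemma nonnull_step:
  assumes "d k \<noteq> 0"
  shows "r (Suc k) = r k" "d k = - ((norm (g k) - \<epsilon> k) / norm (g k)) *\<^sub>R g k"
    "norm (d k) = norm (g k) - \<epsilon> k" "r k < norm (d k)"
proof -
  have big: "r k + \<epsilon> k < norm (g k)"
    using assms null_step_iff[of k] by simp
  then have pos: "0 < norm (g k) - \<epsilon> k" "0 < norm (g k)"
    using radii_pos[of k] by auto
  show "r (Suc k) = r k" and d_eq: "d k = - ((norm (g k) - \<epsilon> k) / norm (g k)) *\<^sub>R g k"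
    using radii_direction_update[of k] big by auto
  then show norm_d: "norm (d k) = norm (g k) - \<epsilon> k"
    using pos by simp
  show "r k < norm (d k)"
    using big norm_d by simp
qed

definition grad_dir_ratio :: real where
  "grad_dir_ratio = 1 + 2 * \<epsilon> 0 / r 0"

lemma grad_dir_ratio_pos: "0 < grad_dir_ratio"
  using parameters unfolding grad_dir_ratio_def by (simp add: add_pos_nonneg)

lemma norm_grad_le_ratio:
  assumes "d k \<noteq> 0"
  shows "norm (grad (x k)) \<le> grad_dir_ratio * norm (d k)"
proof -
  have "\<epsilon> k \<le> \<epsilon> 0 / r 0 * norm (d k)"
    using error_le_radius[of k] nonnull_step(4)[OF assms] parameters
    by (smt (verit) divide_nonneg_pos mult_left_mono)
  moreover have "norm (grad (x k)) \<le> norm (g k) + \<epsilon> k"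
    using norm_triangle_ineq[of "g k" "grad (x k) - g k"] gradient_error[of k]
    by (simp add: norm_minus_commute)
  ultimately have "norm (grad (x k)) \<le> norm (d k) + 2 * (\<epsilon> 0 / r 0 * norm (d k))"
    using nonnull_step(3)[OF assms] by linarith
  then show ?thesis
    unfolding grad_dir_ratio_def by (simp add: algebra_simps)
qed

text \<open>Scaling \<open>g\<^sub>k\<close> down by \<open>(\<parallel>g\<^sub>k\<parallel> - \<epsilon>\<^sub>k) / \<parallel>g\<^sub>k\<parallel>\<close> absorbs the gradient error in the descent
  estimate.\<close>
lemma grad_inner_direction_le:
  assumes "d k \<noteq> 0"
  shows "grad (x k) \<bullet> d k \<le> - (norm (d k))\<^sup>2"
proof -
  define G where "G = norm (g k)"
  have G: "0 < G" "\<epsilon> k < G" and norm_d: "norm (d k) = G - \<epsilon> k"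
    and d_eq: "d k = - ((G - \<epsilon> k) / G) *\<^sub>R g k"
    using nonnull_step[OF assms] radii_pos[of k] G_def by auto
  have "\<bar>(grad (x k) - g k) \<bullet> g k\<bar> \<le> \<epsilon> k * G"
    using Cauchy_Schwarz_ineq2[of "grad (x k) - g k" "g k"] gradient_error[of k] G
    by (smt (verit) G_def mult_right_mono norm_minus_commute)
  moreover have "grad (x k) \<bullet> g k = G * G + (grad (x k) - g k) \<bullet> g k"
    by (simp add: G_def inner_diff_left dot_square_norm power2_eq_square)
  ultimately have "G * G - \<epsilon> k * G \<le> grad (x k) \<bullet> g k"
    by linarith
  then have "(G - \<epsilon> k) / G * (G * G - \<epsilon> k * G) \<le> (G - \<epsilon> k) / G * (grad (x k) \<bullet> g k)"
    using G by (intro mult_left_mono) auto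
  moreover have "grad (x k) \<bullet> d k = - ((G - \<epsilon> k) / G * (grad (x k) \<bullet> g k))"
    using d_eq by simp
  moreover have "(G - \<epsilon> k) / G * (G * G - \<epsilon> k * G) = (norm (d k))\<^sup>2"
    using G by (simp add: norm_d field_simps power2_eq_square)
  ultimately show ?thesis
    by linarith
qed

lemma objective_limit:
  assumes s: "strict_mono s" and cluster: "(x \<circ> s) \<longlonglongrightarrow> xbar"
  shows "f xbar \<le> f (x k)" and "(\<lambda>k. f (x k)) \<longlonglongrightarrow> f xbar"
proof -
  have sub_lim: "(\<lambda>j. f (x (s j))) \<longlonglongrightarrow> f xbar"
    using isCont_tendsto_compose[OF has_derivative_continuous[OF has_derivative_grad] cluster]
    by (simp add: o_def)
  have lower: "f xbar \<le> f (x n)" for n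
  proof (rule LIMSEQ_le_const2[OF sub_lim], intro exI allI impI)
    fix j assume "n \<le> j"
    then show "f (x (s j)) \<le> f (x n)"
      using seq_suble[OF s, of j] objective_decseq by (simp add: decseq_def)
  qed
  then show "f xbar \<le> f (x k)" .
  obtain L where L: "(\<lambda>k. f (x k)) \<longlonglongrightarrow> L"
    using decseq_convergent[OF objective_decseq] lower by blast
  moreover have "L = f xbar"
    using LIMSEQ_unique[OF LIMSEQ_subseq_LIMSEQ[OF L s]] sub_lim by (simp add: o_def)
  ultimately show "(\<lambda>k. f (x k)) \<longlonglongrightarrow> f xbar"
    by simp
qed

lemma step_length_le_desingularizer_decrease:
  assumes \<psi>: "mono_on {0<..<\<eta>} \<psi>" "\<forall>s\<in>{0<..<\<eta>}. 0 < \<psi> s" "(\<lambda>s. 1 / \<psi> s) integrable_on {0<..<\<eta>}"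
    and kl: "c < f (x k) \<Longrightarrow> \<psi> (f (x k) - c) \<le> norm (grad (x k))"
    and lower: "c \<le> f (x (Suc k))" and near: "f (x k) < c + \<eta>"
  shows "norm (x (Suc k) - x k) \<le>
    grad_dir_ratio / \<beta> * (desingularizer \<psi> (f (x k) - c) - desingularizer \<psi> (f (x (Suc k)) - c))"
    (is "_ \<le> _ * (desingularizer \<psi> ?a - desingularizer \<psi> ?b)")
proof -
  have coeff: "0 < grad_dir_ratio / \<beta>"
    using grad_dir_ratio_pos parameters by simp
  have decrease: "\<beta> * t k * (norm (d k))\<^sup>2 \<le> ?a - ?b"
    using sufficient_decrease[of k] by simp
  have \<phi>_mono: "desingularizer \<psi> ?b \<le> desingularizer \<psi> ?a"
    using desingularizer_mono[OF \<psi>] objective_decseq lower near by (simp add: decseq_Suc_iff)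
  show ?thesis
  proof (cases "d k = 0")
    case True
    then show ?thesis
      using iterate_Suc[of k] \<phi>_mono coeff by simp
  next
    case False
    define nd where "nd = norm (d k)"
    have nd: "0 < nd" and t: "0 < t k"
      using False stepsize_pos[of k] nd_def by auto
    have "0 < \<beta> * t k * nd\<^sup>2"
      using parameters nd t by simp
    then have ba: "0 \<le> ?b" "?b < ?a" "?a < \<eta>"
      using decrease lower near nd_def by auto
    have "\<psi> ?a \<le> grad_dir_ratio * nd"
      using kl ba norm_grad_le_ratio[OF False] nd_def by force
    moreover have "0 < \<psi> ?a"
      using ba \<psi>(2) by auto
    moreover have "?a - ?b \<le> \<psi> ?a * (desingularizer \<psi> ?a - desingularizer \<psi> ?b)"
      using desingularizer_diff_ge[OF \<psi>, of ?b ?a] ba \<open>0 < \<psi> ?a\<close> by (simp add: field_simps)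
    ultimately have "?a - ?b \<le> grad_dir_ratio * nd * (desingularizer \<psi> ?a - desingularizer \<psi> ?b)"
      using \<phi>_mono by (smt (verit) mult_right_mono)
    then have "nd * (\<beta> * (t k * nd)) \<le> nd * (grad_dir_ratio * (desingularizer \<psi> ?a - desingularizer \<psi> ?b))"
      using decrease nd_def by (simp add: power2_eq_square algebra_simps)
    then have "\<beta> * (t k * nd) \<le> grad_dir_ratio * (desingularizer \<psi> ?a - desingularizer \<psi> ?b)"
      by (simp only: mult_le_cancel_left_pos[OF nd])
    then have "t k * nd \<le> grad_dir_ratio / \<beta> * (desingularizer \<psi> ?a - desingularizer \<psi> ?b)"
      using parameters by (simp add: field_simps)
    then show ?thesis
      using iterate_Suc[of k] t nd_def by simp
  qed
qed

lemma tendsto_of_KL: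
  assumes s: "strict_mono s" and cluster: "(x \<circ> s) \<longlonglongrightarrow> xbar" and KL: "KL_property f grad xbar"
  shows "x \<longlonglongrightarrow> xbar"
proof -
  obtain \<eta> U \<psi> where \<eta>: "0 < \<eta>" and U: "open U" "xbar \<in> U"
    and \<psi>: "mono_on {0<..<\<eta>} \<psi>" "\<forall>s\<in>{0<..<\<eta>}. 0 < \<psi> s" "(\<lambda>s. 1 / \<psi> s) integrable_on {0<..<\<eta>}"
    and kl: "\<forall>y\<in>U. f xbar < f y \<and> f y < f xbar + \<eta> \<longrightarrow> \<psi> (f y - f xbar) \<le> norm (grad y)"
    using KL unfolding KL_property_def by blast
  obtain \<delta> where \<delta>: "0 < \<delta>" "ball xbar \<delta> \<subseteq> U"
    using U open_contains_ball by blast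
  define u where "u = (\<lambda>k. f (x k) - f xbar)"
  have u_nonneg: "0 \<le> u k" for k
    using objective_limit(1)[OF s cluster] u_def by simp
  have u_lim: "u \<longlonglongrightarrow> 0"
    using tendsto_diff[OF objective_limit(2)[OF s cluster] tendsto_const, of "f xbar"] u_def by simp
  obtain K0 where K0: "\<And>k. K0 \<le> k \<Longrightarrow> u k < \<eta>"
    using order_tendstoD(2)[OF u_lim \<eta>] unfolding eventually_sequentially by blast
  define \<Phi> where "\<Phi> k = grad_dir_ratio / \<beta> * desingularizer \<psi> (u k)" for k
  show ?thesis
  proof (rule tendsto_of_local_length_bound[OF s cluster \<delta>(1)])
    show "0 \<le> \<Phi> k" if "K0 \<le> k" for k
      using desingularizer_nonneg[OF \<psi> u_nonneg K0[OF that]] grad_dir_ratio_pos parameters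
      unfolding \<Phi>_def by simp
    show "\<Phi> \<longlonglongrightarrow> 0"
      unfolding \<Phi>_def
      by (intro tendsto_mult_right_zero desingularizer_tendsto_zero[OF \<psi> u_lim u_nonneg \<eta>])
    show "dist (x (Suc k)) (x k) \<le> \<Phi> k - \<Phi> (Suc k)" if "K0 \<le> k" "dist (x k) xbar < \<delta>" for k
    proof -
      have "x k \<in> U"
        using that(2) \<delta>(2) by (auto simp: dist_commute)
      then have "norm (x (Suc k) - x k) \<le> \<Phi> k - \<Phi> (Suc k)"
        using step_length_le_desingularizer_decrease[OF \<psi>, of "f xbar" k] kl
          u_nonneg[of "Suc k"] K0[OF that(1)]
        unfolding \<Phi>_def u_def by (simp add: right_diff_distrib)
      then show ?thesis
        by (simp add: dist_norm)
    qed
  qed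
qed

lemma armijo_fails_before_stepsize:
  assumes "d k \<noteq> 0" and "t k < 1"
  shows "\<not> armijo f \<beta> (x k) (d k) (t k / \<gamma>)"
proof -
  obtain j where j: "t k = \<gamma> ^ j" and fails: "\<forall>i<j. \<not> armijo f \<beta> (x k) (d k) (\<gamma> ^ i)"
    using stepsize_rule[of k] assms(1) by auto
  obtain i where i: "j = Suc i"
    using assms(2) j by (cases j) auto
  have "t k / \<gamma> = \<gamma> ^ i"
    using j i parameters by simp
  then show ?thesis
    using fails[rule_format, of i] i by simp
qed

lemma armijo_failure_gradient_gap:
  assumes "d k \<noteq> 0" and "0 < s" and "\<not> armijo f \<beta> (x k) (d k) s"
  shows "\<exists>y. norm (y - x k) < s * norm (d k) \<and> (1 - \<beta>) * (norm (d k))\<^sup>2 < (grad y - grad (x k)) \<bullet> d k"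
proof -
  obtain z where z: "0 < z" "z < s"
    and gap: "- (\<beta> * (norm (d k))\<^sup>2) < grad (x k + z *\<^sub>R d k) \<bullet> d k"
    using armijo_failure_mean_value[OF has_derivative_grad assms(2,3)] by blast
  have "norm ((x k + z *\<^sub>R d k) - x k) < s * norm (d k)"
    using z assms(1) by simp
  moreover have "(1 - \<beta>) * (norm (d k))\<^sup>2 < (grad (x k + z *\<^sub>R d k) - grad (x k)) \<bullet> d k"
    using gap grad_inner_direction_le[OF assms(1)] by (simp add: inner_diff_left algebra_simps)
  ultimately show ?thesis
    by blast
qed

lemma gradient_gap_at_short_step:
  assumes dk: "d k \<noteq> 0" and short: "norm (x (Suc k) - x k) < \<gamma> * r k"
  shows "\<exists>y. \<gamma> * norm (y - x k) < norm (x (Suc k) - x k) \<and>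
    (1 - \<beta>) * norm (d k) < norm (grad y - grad (x k))"
proof -
  have step: "norm (x (Suc k) - x k) = t k * norm (d k)"
    using iterate_Suc[of k] stepsize_pos[of k] by simp
  have "\<gamma> * r k \<le> r k"
    using radii_pos(2)[of k] parameters by (intro mult_left_le_one_le) auto
  then have "t k * norm (d k) < norm (d k)"
    using short step nonnull_step(4)[OF dk] by linarith
  then have "t k < 1"
    using dk by (simp add: mult_less_cancel_right2)
  then obtain y where y: "norm (y - x k) < t k / \<gamma> * norm (d k)"
    and gap: "(1 - \<beta>) * (norm (d k))\<^sup>2 < (grad y - grad (x k)) \<bullet> d k"
    using armijo_failure_gradient_gap[OF dk _ armijo_fails_before_stepsize[OF dk]]
      stepsize_pos[of k] parameters by auto
  have "\<gamma> * norm (y - x k) < norm (x (Suc k) - x k)"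
    using y step parameters by (simp add: field_simps)
  moreover have "(1 - \<beta>) * norm (d k) * norm (d k) < norm (grad y - grad (x k)) * norm (d k)"
    using less_le_trans[OF gap norm_cauchy_schwarz] by (simp add: power2_eq_square)
  then have "(1 - \<beta>) * norm (d k) < norm (grad y - grad (x k))"
    using dk by (simp add: mult_less_cancel_right_pos)
  ultimately show ?thesis
    by blast
qed

lemma frequently_null_step:
  assumes lim: "x \<longlonglongrightarrow> xbar"
  shows "\<exists>\<^sub>F k in sequentially. d k = 0"
proof (rule ccontr)
  assume "\<not> ?thesis"
  then obtain N where nonnull: "\<And>k. N \<le> k \<Longrightarrow> d k \<noteq> 0"
    unfolding not_frequently eventually_sequentially by blast
  define R where "R = r N"
  have R: "0 < R"
    using radii_pos R_def by simp
  have r_frozen: "r k = R" if "N \<le> k" for k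
    using that by (induction k rule: dec_induct) (auto simp: R_def nonnull_step(1)[OF nonnull])
  have "0 < (1 - \<beta>) * R / 2"
    using R parameters by simp
  then obtain \<delta> where \<delta>: "0 < \<delta>" and grad_close:
    "\<And>y. dist y xbar < \<delta> \<Longrightarrow> dist (grad y) (grad xbar) < (1 - \<beta>) * R / 2"
    using isCont_grad[of xbar] unfolding continuous_at_eps_delta by blast
  define m where "m = min R (\<delta> / 2)"
  have m: "0 < m" "\<gamma> * m \<le> \<gamma> * R" "m \<le> \<delta> / 2"
    using R \<delta> parameters m_def by auto
  have "(\<lambda>k. x (Suc k) - x k) \<longlonglongrightarrow> 0"
    using tendsto_diff[OF LIMSEQ_Suc[OF lim] lim] by simp
  then have "\<forall>\<^sub>F k in sequentially. norm (x (Suc k) - x k) < \<gamma> * m"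
    using order_tendstoD(2)[OF tendsto_norm_zero, of _ _ "\<gamma> * m"] m parameters by simp
  moreover have "\<forall>\<^sub>F k in sequentially. dist (x k) xbar < \<delta> / 2"
    using lim \<delta> unfolding tendsto_iff by (meson half_gt_zero)
  ultimately obtain k where k: "norm (x (Suc k) - x k) < \<gamma> * m" "dist (x k) xbar < \<delta> / 2" "N \<le> k"
    using eventually_happens'[OF sequentially_bot] eventually_ge_at_top[of N]
    by (metis (mono_tags, lifting) eventually_conj)
  have dk: "d k \<noteq> 0" "R < norm (d k)"
    using nonnull[OF k(3)] nonnull_step(4)[OF nonnull[OF k(3)]] r_frozen[OF k(3)] by auto
  obtain y where y: "\<gamma> * norm (y - x k) < norm (x (Suc k) - x k)"
    and gap: "(1 - \<beta>) * norm (d k) < norm (grad y - grad (x k))"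
    using gradient_gap_at_short_step[OF dk(1)] k(1) m(2) r_frozen[OF k(3)] by force
  have "norm (y - x k) < \<delta> / 2"
    using y k(1) m parameters by (smt (verit) mult_less_cancel_left_pos)
  then have "dist y xbar < \<delta>"
    using k(2) dist_triangle[of y xbar "x k"] by (simp add: dist_norm)
  moreover have "dist (x k) xbar < \<delta>"
    using k(2) zero_le_dist[of "x k" xbar] by linarith
  ultimately have "norm (grad y - grad (x k)) < (1 - \<beta>) * R"
    using grad_close[of y] grad_close[of "x k"] dist_triangle2[of "grad y" "grad (x k)" "grad xbar"]
    by (simp add: dist_norm)
  moreover have "(1 - \<beta>) * R < (1 - \<beta>) * norm (d k)"
    using dk parameters by simp
  ultimately show False
    using gap by linarith
qed

lemma radii_tendsto_zero:
  assumes null: "\<exists>\<^sub>F k in sequentially. d k = 0"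
  shows "r \<longlonglongrightarrow> 0" "\<epsilon> \<longlonglongrightarrow> 0"
proof -
  have "\<exists>k. r k \<le> r 0 * \<mu> ^ n" for n
  proof (induction n)
    case (Suc n)
    then obtain k where k: "r k \<le> r 0 * \<mu> ^ n"
      by blast
    obtain m where m: "k \<le> m" "d m = 0"
      using null unfolding frequently_sequentially by blast
    then have "r (Suc m) = \<mu> * r m"
      using radii_direction_update[of m] null_step_iff[of m] by auto
    also have "\<dots> \<le> \<mu> * (r 0 * \<mu> ^ n)"
      using radius_antimono[OF m(1)] k parameters by simp
    finally show ?case
      by (auto simp: algebra_simps)
  qed auto
  then have upper: "\<forall>\<^sub>F k in sequentially. r k < e" if e: "0 < e" for e
  proof -
    obtain n where "\<mu> ^ n < e / r 0"
      using real_arch_pow_inv[of "e / r 0" \<mu>] e parameters by auto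
    moreover obtain k where "r k \<le> r 0 * \<mu> ^ n"
      using \<open>\<And>n. \<exists>k. r k \<le> r 0 * \<mu> ^ n\<close> by blast
    ultimately have "r k < e"
      using parameters by (simp add: field_simps)
    then show ?thesis
      unfolding eventually_sequentially using radius_antimono le_less_trans by blast
  qed
  have lower: "\<forall>\<^sub>F k in sequentially. a < r k" if "a < 0" for a
    using radii_pos(2) that by (intro always_eventually allI) (rule less_trans)
  show r_lim: "r \<longlonglongrightarrow> 0"
    by (rule order_tendstoI[OF lower upper])
  show "\<epsilon> \<longlonglongrightarrow> 0"
    using radii_pos error_le_radius
    by (intro tendsto_sandwich[OF _ _ tendsto_const tendsto_mult_right_zero[OF r_lim, where c="\<epsilon> 0 / r 0"]])
       (auto intro: always_eventually less_imp_le)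
qed

lemma grad_limit_eq_zero:
  assumes lim: "x \<longlonglongrightarrow> xbar"
  shows "grad xbar = 0"
proof -
  have gap_lim: "(\<lambda>k. norm (grad (x k)) - (r k + 2 * \<epsilon> k)) \<longlonglongrightarrow> norm (grad xbar) - (0 + 2 * 0)"
    using isCont_tendsto_compose[OF isCont_grad lim] radii_tendsto_zero[OF frequently_null_step[OF lim]]
    by (intro tendsto_intros)
  have gap_nonpos: "\<exists>\<^sub>F k in sequentially. norm (grad (x k)) - (r k + 2 * \<epsilon> k) \<le> 0"
    using frequently_null_step[OF lim] by (rule frequently_elim1) (simp add: norm_grad_le_at_null_step)
  have "\<not> 0 < norm (grad xbar)"
  proof
    assume "0 < norm (grad xbar)"
    then have "\<forall>\<^sub>F k in sequentially. 0 < norm (grad (x k)) - (r k + 2 * \<epsilon> k)"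
      using order_tendstoD(1)[OF gap_lim, of 0] by simp
    from frequently_eventually_conj[OF gap_nonpos this] show False
      by (auto dest: frequently_ex)
  qed
  then show ?thesis
    by simp
qed

end

theorem mainTheorem13:
  fixes f :: "'a::euclidean_space \<Rightarrow> real" and grad :: "'a \<Rightarrow> 'a"
    and x g d :: "nat \<Rightarrow> 'a" and \<epsilon> r t \<rho> :: "nat \<Rightarrow> real"
    and \<mu> \<theta> \<beta> \<gamma> \<tau> :: real and xbar :: 'a
  assumes "C1_with_gradient f grad"
    and "IRG_backtracking f grad \<mu> \<theta> \<beta> \<gamma> \<tau> \<rho> x g \<epsilon> r d t"
    and "\<theta> < \<mu>"
    and "\<rho> \<longlonglongrightarrow> 0"
    and "\<exists>s::nat \<Rightarrow> nat. strict_mono s \<and> (x \<circ> s) \<longlonglongrightarrow> xbar"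
    and "KL_property f grad xbar"
  shows "grad xbar = 0 \<and> x \<longlonglongrightarrow> xbar"
proof -
  interpret irg_backtracking f grad x g d \<epsilon> r t \<rho> \<mu> \<theta> \<beta> \<gamma> \<tau>
    using assms(1-3) by unfold_locales
  obtain s :: "nat \<Rightarrow> nat" where "strict_mono s" "(x \<circ> s) \<longlonglongrightarrow> xbar"
    using assms(5) by blast
  then have "x \<longlonglongrightarrow> xbar"
    using tendsto_of_KL assms(6) by blast
  then show ?thesis
    using grad_limit_eq_zero by blast
qed

end
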